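(* Let $(N_n)_{n\in\mathbb{N}}$ be a strictly increasing sequence of natural numbers and let $f_n:\ell_1\to\mathbb{R}$ be defined as below. Then $\big\|\sum_{i=1}^n f_i \big\|_{FBL[c_0]} \leq 1$ for every $n \in \mathbb{N}$.
   Context: Identify $c_0^*=\ell_1$ and write $x^*=(x^*_1,x^*_2,\ldots)$. For $n<m$ let $g_{nm}: \ell_1 \to [0,1]$ be any continuous function such that $g_{nm}(x^* ) = 0$ if $N_m|x_n^*| \leq |x_m^*|$, $g_{nm}(x^* ) = 1$ if $|x_m^*| \leq (N_m-1)|x_n^*|$, and $g_{nm}(x^* )=g_{nm}(x^*/\|x^*\|)$ whenever $x^* \neq 0$. Define $$f_n(x^* ) = \big(|x_n^*|-N_n\max\{|x_m^*| : m<n\}\big)^+ \cdot \prod_{m > n}g_{nm}(x^* ),$$ where $r^+=\max\{r,0\}$ and the max over the empty set is $0$. For $f:\ell_1\to\mathbb{R}$, $\|f\|_{FBL[c_0]} = \sup \{\sum_{i = 1}^k |f(x_{i}^{*})| : k \in \mathbb{N},\ x_1^{*}, \ldots, x_k^{*} \in \ell_1,\ \sup_{x \in B_{c_0}} \sum_{i=1}^k |x_i^{*}(x)| \leq 1 \}$, the norm of the free Banach lattice $FBL[c_0]$ (the closure in this norm of the vector sublattice of $\mathbb{R}^{\ell_1}$ generated by the evaluations $x^*\mapsto x^*(x)$, $x\in c_0$). *)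

theory Defs
  imports "HOL-Analysis.Analysis"
begin

text \<open>Sequences are indexed from 0 (coordinate i here = coordinate i+1 in the paper).
  The dual c0* is identified with l1, both realised as real sequences nat => real.\<close>

definition l1 :: "(nat \<Rightarrow> real) set" where
  "l1 = {x. summable (\<lambda>i. \<bar>x i\<bar>)}"

definition l1norm :: "(nat \<Rightarrow> real) \<Rightarrow> real" where
  "l1norm x = (\<Sum>i. \<bar>x i\<bar>)"

definition c0 :: "(nat \<Rightarrow> real) set" where
  "c0 = {x. x \<longlonglongrightarrow> 0}"

definition ball_c0 :: "(nat \<Rightarrow> real) set" where
  "ball_c0 = {x \<in> c0. \<forall>i. \<bar>x i\<bar> \<le> 1}"

definition pairing :: "(nat \<Rightarrow> real) \<Rightarrow> (nat \<Rightarrow> real) \<Rightarrow> real" where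
  "pairing xs x = (\<Sum>i. xs i * x i)"

text \<open>The FBL[c0] norm of a function f : l1 -> R (valued in ereal, so that it is +\<infinity>
  when the defining supremum is unbounded).\<close>
definition fbl_norm :: "((nat \<Rightarrow> real) \<Rightarrow> real) \<Rightarrow> ereal" where
  "fbl_norm f = (SUP p \<in> {(k::nat, xs). (\<forall>i<k. xs i \<in> l1) \<and>
                       (\<forall>x\<in>ball_c0. (\<Sum>i<k. \<bar>pairing (xs i) x\<bar>) \<le> 1)}.
                   ereal (\<Sum>i<fst p. \<bar>f (snd p i)\<bar>))"

text \<open>Admissible g_{nm} (for n < m) for the sequence N.  The two value conditions are
  imposed where (x*_n, x*_m) \<noteq> (0,0), and continuity (l1-norm topology) on that set.\<close>
definition g_admissible :: "(nat \<Rightarrow> nat) \<Rightarrow> nat \<Rightarrow> nat \<Rightarrow> ((nat \<Rightarrow> real) \<Rightarrow> real) \<Rightarrow> bool" where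
  "g_admissible N n m h \<longleftrightarrow>
     (\<forall>x\<in>l1. 0 \<le> h x \<and> h x \<le> 1) \<and>
     (\<forall>x\<in>l1. (x n \<noteq> 0 \<or> x m \<noteq> 0) \<longrightarrow> real (N m) * \<bar>x n\<bar> \<le> \<bar>x m\<bar> \<longrightarrow> h x = 0) \<and>
     (\<forall>x\<in>l1. (x n \<noteq> 0 \<or> x m \<noteq> 0) \<longrightarrow> \<bar>x m\<bar> \<le> (real (N m) - 1) * \<bar>x n\<bar> \<longrightarrow> h x = 1) \<and>
     (\<forall>x\<in>l1. (\<exists>i. x i \<noteq> 0) \<longrightarrow> h x = h (\<lambda>i. x i / l1norm x)) \<and>
     (\<forall>x\<in>l1. (x n \<noteq> 0 \<or> x m \<noteq> 0) \<longrightarrow> (\<forall>e>0. \<exists>d>0. \<forall>y\<in>l1. (y n \<noteq> 0 \<or> y m \<noteq> 0) \<longrightarrow>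
          l1norm (\<lambda>i. y i - x i) < d \<longrightarrow> \<bar>h y - h x\<bar> < e))"

text \<open>f_n; the infinite product over m > n is the limit of the partial products.\<close>
definition fn :: "(nat \<Rightarrow> nat) \<Rightarrow> (nat \<Rightarrow> nat \<Rightarrow> (nat \<Rightarrow> real) \<Rightarrow> real) \<Rightarrow> nat \<Rightarrow> (nat \<Rightarrow> real) \<Rightarrow> real" where
  "fn N g n x = max 0 (\<bar>x n\<bar> - real (N n) * Max ({\<bar>x m\<bar> | m. m < n} \<union> {0}))
                * lim (\<lambda>K. \<Prod>m\<in>{n<..K}. g n m x)"

end

theory Submission
  imports Defs
begin

text \<open>At every point at most one of the \<open>f\<^sub>i\<close> is nonzero: if \<open>f\<^sub>k(x\<^sup>*) \<noteq> 0\<close> then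
  \<open>|x\<^sup>*\<^sub>k| > N\<^sub>k |x\<^sup>*\<^sub>i|\<close> for \<open>i < k\<close>, which forces \<open>g\<^sub>i\<^sub>k(x\<^sup>*) = 0\<close> and hence \<open>f\<^sub>i(x\<^sup>*) = 0\<close>. Since also
  \<open>|f\<^sub>i(x\<^sup>*)| \<le> |x\<^sup>*\<^sub>i|\<close>, the sum \<open>F = f\<^sub>1 + \<dots> + f\<^sub>n\<close> vanishes or satisfies \<open>|F(x\<^sup>*)| \<le> |x\<^sup>*\<^sub>m|\<close> for some \<open>m \<le> n\<close>.
  Any such \<open>F\<close> has norm at most 1: given \<open>x\<^sup>*\<^sub>1, \<dots>, x\<^sup>*\<^sub>k\<close>, averaging over sign vectors
  \<open>\<epsilon> \<in> {\<plusminus>1}\<^sup>n\<close> gives \<open>\<Sum>\<^sub>j |F(x\<^sup>*\<^sub>j)| \<le> \<Sum>\<^sub>j |x\<^sup>*\<^sub>j(\<epsilon>)|\<close> for some \<open>\<epsilon>\<close>, and \<open>\<epsilon>\<close>, padded with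
  zeros, lies in the unit ball of \<open>c\<^sub>0\<close>.\<close>

lemma exists_sign_vector_sum_abs_ge:
  fixes a :: "nat \<Rightarrow> nat \<Rightarrow> real" and c t :: "nat \<Rightarrow> real"
  assumes "\<And>j. j < k \<Longrightarrow> t j \<le> \<bar>c j\<bar> \<or> (\<exists>m<n. t j \<le> \<bar>a j m\<bar>)"
  shows "\<exists>e. (\<forall>m. e m = 1 \<or> e m = -1) \<and>
           (\<Sum>j<k. t j) \<le> (\<Sum>j<k. \<bar>c j + (\<Sum>m<n. a j m * e m)\<bar>)"
  using assms
proof (induction n arbitrary: c t)
  case 0
  then show ?case
    by (intro exI[of _ "\<lambda>_. 1"]) (auto intro: sum_mono)
next
  case (Suc n)
  text \<open>Fix the last sign \<open>s\<close>, absorb \<open>s a\<^sub>j\<^sub>n\<close> into \<open>c\<^sub>j\<close> and lower the targets \<open>t\<^sub>j\<close> that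
    only the last coordinate bounded; \<open>|c + a| + |c - a| \<ge> 2 max |c| |a|\<close> shows that
    one of the two choices of \<open>s\<close> loses nothing.\<close>
  define ts where
    "ts s j = (if \<exists>m<n. t j \<le> \<bar>a j m\<bar> then t j else \<bar>c j + s * a j n\<bar>)" for s :: real and j
  have IH: "\<exists>e. (\<forall>m. e m = 1 \<or> e m = -1) \<and>
              (\<Sum>j<k. ts s j) \<le> (\<Sum>j<k. \<bar>(c j + s * a j n) + (\<Sum>m<n. a j m * e m)\<bar>)" for s
    by (rule Suc.IH) (auto simp: ts_def)
  have pointwise: "t j + t j \<le> ts 1 j + ts (-1) j" if "j < k" for j
  proof (cases "\<exists>m<n. t j \<le> \<bar>a j m\<bar>")
    case False
    with Suc.prems that have "t j \<le> \<bar>c j\<bar> \<or> t j \<le> \<bar>a j n\<bar>"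
      by (auto simp: less_Suc_eq)
    with False show ?thesis unfolding ts_def by (simp (no_asm_simp)) arith
  qed (simp add: ts_def)
  have "(\<Sum>j<k. t j) + (\<Sum>j<k. t j) \<le> (\<Sum>j<k. ts 1 j) + (\<Sum>j<k. ts (-1) j)"
    unfolding sum.distrib[symmetric] using pointwise by (intro sum_mono) simp
  then obtain s where s: "s = 1 \<or> s = -1" and t_le_ts: "(\<Sum>j<k. t j) \<le> (\<Sum>j<k. ts s j)"
    by (metis add_strict_mono not_le)
  obtain e where e: "\<forall>m. e m = 1 \<or> e m = -1"
    and ts_le: "(\<Sum>j<k. ts s j) \<le> (\<Sum>j<k. \<bar>(c j + s * a j n) + (\<Sum>m<n. a j m * e m)\<bar>)"
    using IH by blast
  have "(c j + s * a j n) + (\<Sum>m<n. a j m * e m) = c j + (\<Sum>m<Suc n. a j m * (e(n := s)) m)" for j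
    by (simp add: algebra_simps)
  then have "(\<Sum>j<k. t j) \<le> (\<Sum>j<k. \<bar>c j + (\<Sum>m<Suc n. a j m * (e(n := s)) m)\<bar>)"
    using order_trans[OF t_le_ts ts_le] by (simp only:)
  moreover have "\<forall>m. (e(n := s)) m = 1 \<or> (e(n := s)) m = -1"
    using e s by simp
  ultimately show ?case
    by blast
qed

lemma truncation_in_ball_c0:
  assumes "\<And>m. \<bar>e m\<bar> \<le> 1"
  shows "(\<lambda>m. if m < n then e m else 0) \<in> ball_c0"
proof -
  have "(\<lambda>m. if m < n then e m else 0 :: real) \<longlonglongrightarrow> 0"
    by (rule tendsto_eventually) (auto intro: eventually_sequentiallyI[of n])
  then show ?thesis
    using assms unfolding ball_c0_def c0_def by auto
qed

lemma pairing_truncation: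
  "pairing x (\<lambda>m. if m < n then e m else 0) = (\<Sum>m<n. x m * e m)"
proof -
  have "pairing x (\<lambda>m. if m < n then e m else 0) = (\<Sum>m<n. x m * (if m < n then e m else 0))"
    unfolding pairing_def by (rule suminf_finite) auto
  then show ?thesis by simp
qed

lemma fbl_norm_le_1_if_dominated_by_coordinate:
  assumes "\<And>x. x \<in> l1 \<Longrightarrow> F x = 0 \<or> (\<exists>m<n. \<bar>F x\<bar> \<le> \<bar>x m\<bar>)"
  shows "fbl_norm F \<le> 1"
  unfolding fbl_norm_def
proof (rule SUP_least, clarify, unfold fst_conv snd_conv)
  fix k and xs :: "nat \<Rightarrow> nat \<Rightarrow> real"
  assume l1: "\<forall>i<k. xs i \<in> l1"
    and unit_ball: "\<forall>x\<in>ball_c0. (\<Sum>i<k. \<bar>pairing (xs i) x\<bar>) \<le> 1"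
  have "\<bar>F (xs j)\<bar> \<le> \<bar>0\<bar> \<or> (\<exists>m<n. \<bar>F (xs j)\<bar> \<le> \<bar>xs j m\<bar>)" if "j < k" for j
    using assms[of "xs j"] l1 that by auto
  then obtain e where e: "\<forall>m. e m = 1 \<or> e m = -1"
    and F_le: "(\<Sum>j<k. \<bar>F (xs j)\<bar>) \<le> (\<Sum>j<k. \<bar>0 + (\<Sum>m<n. xs j m * e m)\<bar>)"
    using exists_sign_vector_sum_abs_ge[of k "\<lambda>j. \<bar>F (xs j)\<bar>" "\<lambda>_. 0"] by blast
  have "\<bar>e m\<bar> \<le> 1" for m
    using e[rule_format, of m] by auto
  then have "(\<lambda>m. if m < n then e m else 0) \<in> ball_c0"
    by (rule truncation_in_ball_c0)
  then have "(\<Sum>j<k. \<bar>pairing (xs j) (\<lambda>m. if m < n then e m else 0)\<bar>) \<le> 1"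
    using unit_ball by blast
  then have "(\<Sum>j<k. \<bar>\<Sum>m<n. xs j m * e m\<bar>) \<le> 1"
    by (simp add: pairing_truncation)
  with F_le show "ereal (\<Sum>j<k. \<bar>F (xs j)\<bar>) \<le> 1"
    by simp
qed

lemma Max_prefix_abs_nonneg: "0 \<le> Max ({\<bar>x m\<bar> | m. m < (n :: nat)} \<union> {0 :: real})"
  by (rule Max_ge) (auto simp: setcompr_eq_image)

lemma abs_le_Max_prefix_abs: "i < n \<Longrightarrow> \<bar>x i\<bar> \<le> Max ({\<bar>x m\<bar> | m. m < (n :: nat)} \<union> {0 :: real})"
  by (rule Max_ge) (auto simp: setcompr_eq_image)

lemma lim_prod_eq_0:
  assumes "i < m" "h m = 0"
  shows "lim (\<lambda>K. \<Prod>j\<in>{i<..K}. h j) = (0 :: real)"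
proof (rule limI, rule tendsto_eventually)
  show "\<forall>\<^sub>F K in sequentially. (\<Prod>j\<in>{i<..K}. h j) = 0"
    using assms by (intro eventually_sequentiallyI[of m]) (auto intro!: prod_zero)
qed

lemma lim_prod_in_unit_interval:
  assumes "\<And>j. i < j \<Longrightarrow> 0 \<le> h j \<and> h j \<le> (1 :: real)"
  shows "0 \<le> lim (\<lambda>K. \<Prod>j\<in>{i<..K}. h j) \<and> lim (\<lambda>K. \<Prod>j\<in>{i<..K}. h j) \<le> 1"
proof -
  define P where "P K = (\<Prod>j\<in>{i<..K}. h j)" for K
  have P_nonneg: "0 \<le> P K" for K
    unfolding P_def using assms by (auto intro: prod_nonneg)
  have "decseq P"
  proof (rule decseq_SucI)
    fix K
    show "P (Suc K) \<le> P K"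
    proof (cases "i \<le> K")
      case True
      then have "{i<..Suc K} = insert (Suc K) {i<..K}" by auto
      then have "P (Suc K) = h (Suc K) * P K" unfolding P_def by simp
      with assms[of "Suc K"] True P_nonneg[of K] show ?thesis
        by (simp add: mult_left_le_one_le)
    next
      case False
      then have "{i<..Suc K} = {i<..K}" by auto
      then show ?thesis unfolding P_def by simp
    qed
  qed
  then obtain L where L: "P \<longlonglongrightarrow> L" "\<forall>K. L \<le> P K"
    using decseq_convergent[of P 0] P_nonneg by blast
  have "0 \<le> L" using L(1) P_nonneg by (intro LIMSEQ_le_const) auto
  moreover have "P 0 \<le> 1"
    unfolding P_def using assms by (intro prod_le_1) auto
  then have "L \<le> 1"
    using L(2) order_trans by blast
  ultimately show ?thesis
    using limI[OF L(1)] unfolding P_def by simp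
qed

context
  fixes N :: "nat \<Rightarrow> nat" and g :: "nat \<Rightarrow> nat \<Rightarrow> (nat \<Rightarrow> real) \<Rightarrow> real"
  assumes admissible: "\<And>a b. a < b \<Longrightarrow> g_admissible N a b (g a b)"
begin

lemma fn_nonneg_le_abs:
  assumes "x \<in> l1"
  shows "0 \<le> fn N g i x \<and> fn N g i x \<le> \<bar>x i\<bar>"
proof -
  define M where "M = real (N i) * Max ({\<bar>x m\<bar> | m. m < i} \<union> {0})"
  define L where "L = lim (\<lambda>K. \<Prod>m\<in>{i<..K}. g i m x)"
  have "0 \<le> g i m x \<and> g i m x \<le> 1" if "i < m" for m
    using admissible[OF that] assms unfolding g_admissible_def by blast
  then have L: "0 \<le> L \<and> L \<le> 1"
    unfolding L_def by (rule lim_prod_in_unit_interval)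
  have "0 \<le> M"
    unfolding M_def using Max_prefix_abs_nonneg[of x i] by simp
  moreover have "max 0 (\<bar>x i\<bar> - M) * L \<le> max 0 (\<bar>x i\<bar> - M)"
    using L by (intro mult_left_le) auto
  ultimately show ?thesis
    using L unfolding fn_def M_def[symmetric] L_def[symmetric] by auto
qed

lemma fn_nonzero_imp_dominant:
  assumes "fn N g k x \<noteq> 0" "i < k"
  shows "real (N k) * \<bar>x i\<bar> < \<bar>x k\<bar>"
proof -
  have "real (N k) * Max ({\<bar>x m\<bar> | m. m < k} \<union> {0}) < \<bar>x k\<bar>"
    using assms(1) unfolding fn_def by (auto simp: max_def split: if_splits)
  moreover have "real (N k) * \<bar>x i\<bar> \<le> real (N k) * Max ({\<bar>x m\<bar> | m. m < k} \<union> {0})"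
    using abs_le_Max_prefix_abs[OF assms(2)] by (simp add: mult_left_mono)
  ultimately show ?thesis by linarith
qed

lemma fn_eq_0_if_later_nonzero:
  assumes "x \<in> l1" "i < k" "fn N g k x \<noteq> 0"
  shows "fn N g i x = 0"
proof -
  have dominant: "real (N k) * \<bar>x i\<bar> < \<bar>x k\<bar>"
    using fn_nonzero_imp_dominant[OF assms(3,2)] .
  moreover have "0 \<le> real (N k) * \<bar>x i\<bar>"
    by simp
  ultimately have "x k \<noteq> 0"
    by (metis abs_zero not_less order_less_le_trans)
  moreover have "\<forall>x\<in>l1. (x i \<noteq> 0 \<or> x k \<noteq> 0) \<longrightarrow> real (N k) * \<bar>x i\<bar> \<le> \<bar>x k\<bar> \<longrightarrow> g i k x = 0"
    using admissible[OF assms(2)] unfolding g_admissible_def by (elim conjE)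
  ultimately have "g i k x = 0"
    using dominant assms(1) by auto
  then have "lim (\<lambda>K. \<Prod>j\<in>{i<..K}. g i j x) = 0"
    by (rule lim_prod_eq_0[OF assms(2)])
  then show ?thesis
    unfolding fn_def by simp
qed

lemma sum_fn_dominated_by_coordinate:
  assumes "x \<in> l1"
  shows "(\<Sum>i<n. fn N g i x) = 0 \<or> (\<exists>m<n. \<bar>\<Sum>i<n. fn N g i x\<bar> \<le> \<bar>x m\<bar>)"
proof (cases "\<exists>i<n. fn N g i x \<noteq> 0")
  case True
  then obtain i where i: "i < n" "fn N g i x \<noteq> 0" by blast
  have "fn N g j x = 0" if "j \<noteq> i" for j
    using fn_eq_0_if_later_nonzero[OF assms, of i j] fn_eq_0_if_later_nonzero[OF assms, of j i]
      i(2) that by (cases "i < j") auto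
  then have "(\<Sum>j<n. fn N g j x) = fn N g i x"
    using i(1) by (subst sum.remove[of _ i]) auto
  then show ?thesis
    using i(1) fn_nonneg_le_abs[OF assms, of i] by auto
qed simp

end

theorem mainTheorem9:
  fixes N :: "nat \<Rightarrow> nat" and g :: "nat \<Rightarrow> nat \<Rightarrow> (nat \<Rightarrow> real) \<Rightarrow> real" and n :: nat
  assumes "strict_mono N"
    and "\<And>a b. a < b \<Longrightarrow> g_admissible N a b (g a b)"
  shows "fbl_norm (\<lambda>x. \<Sum>i<n. fn N g i x) \<le> 1"
  using sum_fn_dominated_by_coordinate[OF assms(2)]
  by (rule fbl_norm_le_1_if_dominated_by_coordinate)

end
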